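(* Let $\mathcal{M},\mathcal{N}\subset\mathbb{R}^n$ satisfy the regularity assumption at $\bar x\in\mathcal{M}\cap\mathcal{N}$ and let $S=(1-\alpha)I+\alpha\Pi^{\alpha_2}_{\mathcal{M}}\Pi^{\alpha_1}_{\mathcal{N}}$ be the generalized alternating projections operator. Then the Jacobian of $S$ at $\bar x$ is $$DS(\bar x) = (1-\alpha)I+\alpha\Pi^{\alpha_2}_{T_{\mathcal{M}}(\bar x)}\Pi^{\alpha_1}_{T_{\mathcal{N}}(\bar x)}.$$
   Context: $\Pi_C$ is the projection onto $C$ and $\Pi_C^\alpha := (1-\alpha)I+\alpha\Pi_C$. A set $\mathcal{M}$ is a $\mathcal{C}^k$-manifold around $x$ if there is an open $U\ni x$ with $\mathcal{M}\cap U=\{y:F(y)=0\}$ for a $\mathcal{C}^k$ map $F:U\to\mathbb{R}^d$ with surjective derivative throughout $U$; $T_{\mathcal{M}}(x)=\ker DF(x)$. Regularity assumption at $x$: $\mathcal{M},\mathcal{N}$ are $\mathcal{C}^k$-smooth manifolds ($k\ge2$) around $x\in\mathcal{M}\cap\mathcal{N}$, $\mathcal{M}\cap\mathcal{N}$ is a $\mathcal{C}^k$ manifold around $x$, and $T_{\mathcal{M}\cap\mathcal{N}}(x)=T_{\mathcal{M}}(x)\cap T_{\mathcal{N}}(x)$. *)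

theory Defs
  imports "HOL-Analysis.Analysis"
begin

text \<open>Iterated directional (Frechet) derivatives: iter_deriv F [v1,...,vj] y = D^j F(y)[v1,...,vj].\<close>
fun iter_deriv :: "('a::real_normed_vector \<Rightarrow> 'b::real_normed_vector) \<Rightarrow> 'a list \<Rightarrow> 'a \<Rightarrow> 'b" where
  "iter_deriv F [] = F"
| "iter_deriv F (v # vs) = (\<lambda>y. frechet_derivative (iter_deriv F vs) (at y) v)"

definition C_k_on :: "nat \<Rightarrow> 'a::real_normed_vector set \<Rightarrow> ('a \<Rightarrow> 'b::real_normed_vector) \<Rightarrow> bool" where
  "C_k_on k U F \<longleftrightarrow>
     (\<forall>vs. length vs \<le> k \<longrightarrow> continuous_on U (iter_deriv F vs)
        \<and> (length vs < k \<longrightarrow> iter_deriv F vs differentiable_on U))"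

text \<open>A local defining chart of M around x: F : U \<rightarrow> V (V a linear subspace, playing the role of R^d),
  C^k, with surjective derivative onto V throughout U, and M \<inter> U = F^{-1}(0).\<close>
definition manifold_chart :: "nat \<Rightarrow> 'a::euclidean_space set \<Rightarrow> 'a \<Rightarrow> 'a set \<Rightarrow> ('a \<Rightarrow> 'a) \<Rightarrow> 'a set \<Rightarrow> bool" where
  "manifold_chart k M x U F V \<longleftrightarrow>
     open U \<and> x \<in> U \<and> subspace V \<and> C_k_on k U F \<and>
     (\<forall>y\<in>U. F y \<in> V \<and> F differentiable (at y) \<and> range (frechet_derivative F (at y)) = V) \<and>
     M \<inter> U = {y \<in> U. F y = 0}"

definition manifold_around :: "nat \<Rightarrow> 'a::euclidean_space set \<Rightarrow> 'a \<Rightarrow> bool" where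
  "manifold_around k M x \<longleftrightarrow> (\<exists>U F V. manifold_chart k M x U F V)"

text \<open>Tangent space T_M(x) = ker DF(x) for a defining chart F (independent of the chart).\<close>
definition tangent_space :: "nat \<Rightarrow> 'a::euclidean_space set \<Rightarrow> 'a \<Rightarrow> 'a set" where
  "tangent_space k M x =
     (SOME T. \<exists>U F V. manifold_chart k M x U F V \<and> T = {v. frechet_derivative F (at x) v = 0})"

definition proj :: "'a::euclidean_space set \<Rightarrow> 'a \<Rightarrow> 'a" where
  "proj C y = (SOME z. z \<in> C \<and> (\<forall>w\<in>C. dist y z \<le> dist y w))"

definition relax_proj :: "real \<Rightarrow> 'a::euclidean_space set \<Rightarrow> 'a \<Rightarrow> 'a" where
  "relax_proj \<alpha> C y = (1 - \<alpha>) *\<^sub>R y + \<alpha> *\<^sub>R proj C y"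

definition regularity_assumption :: "nat \<Rightarrow> 'a::euclidean_space set \<Rightarrow> 'a set \<Rightarrow> 'a \<Rightarrow> bool" where
  "regularity_assumption k M N x \<longleftrightarrow>
     2 \<le> k \<and> x \<in> M \<inter> N \<and> manifold_around k M x \<and> manifold_around k N x \<and>
     manifold_around k (M \<inter> N) x \<and>
     tangent_space k (M \<inter> N) x = tangent_space k M x \<inter> tangent_space k N x"

end

theory Submission
  imports Defs
begin

(* The derivative of the nearest-point map onto M at a point x of M is the orthogonal
   projection P onto a subspace T as soon as M and x + T agree to first order at x:
   points of M near x lie within o(|p - x|) of x + T, and points of x + T near x lie
   within o(|t|) of M.  Indeed, if p is nearest to y in M, comparing |y - p| with the
   distance from y to a point of M close to x + P (y - x) and splitting orthogonally
   along T forces p - x = P (y - x) + o(|y - x|).  For a manifold given by a C^1 chart F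
   with T = ker DF(x), the first condition follows from the differentiability of F at x
   and the second from the inverse function theorem applied to
   y |-> P (y - x) + DF(x)^* F(y).  The formula for DS then follows from the chain rule. *)

section \<open>Orthogonal projection onto a subspace\<close>

lemma proj_subspace_eqI:
  fixes T :: "'a::euclidean_space set"
  assumes T: "subspace T" and "y \<in> T" and orth: "\<And>w. w \<in> T \<Longrightarrow> (h - y) \<bullet> w = 0"
  shows "proj T h = y"
  unfolding proj_def
proof (rule some_equality)
  have pyth: "dist h w ^ 2 = dist h y ^ 2 + dist y w ^ 2" if "w \<in> T" for w
  proof -
    have "(h - y) \<bullet> (y - w) = 0"
      using orth \<open>y \<in> T\<close> that T by (simp add: subspace_diff)
    then have "norm ((h - y) + (y - w)) ^ 2 = norm (h - y) ^ 2 + norm (y - w) ^ 2"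
      by (intro norm_add_Pythagorean) (simp add: orthogonal_def)
    then show ?thesis by (simp add: dist_norm)
  qed
  show "y \<in> T \<and> (\<forall>w\<in>T. dist h y \<le> dist h w)"
  proof (intro conjI ballI)
    fix w assume "w \<in> T"
    then have "dist h y ^ 2 \<le> dist h w ^ 2" using pyth by simp
    then show "dist h y \<le> dist h w" by (rule power2_le_imp_le) simp
  qed (fact \<open>y \<in> T\<close>)
  fix z assume z: "z \<in> T \<and> (\<forall>w\<in>T. dist h z \<le> dist h w)"
  then have "dist h z ^ 2 \<le> dist h y ^ 2"
    using \<open>y \<in> T\<close> by (simp add: power_mono)
  with pyth z show "z = y" by simp
qed

lemma proj_subspace:
  fixes T :: "'a::euclidean_space set"
  assumes "subspace T"
  shows proj_subspace_in: "proj T h \<in> T"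
    and proj_subspace_orthogonal: "w \<in> T \<Longrightarrow> (h - proj T h) \<bullet> w = 0"
proof -
  obtain y z where "y \<in> span T" and z: "\<And>w. w \<in> span T \<Longrightarrow> orthogonal z w" and "h = y + z"
    using orthogonal_subspace_decomp_exists by blast
  moreover have "span T = T"
    using assms by (simp add: span_eq_iff)
  ultimately have "y \<in> T" and "\<And>w. w \<in> T \<Longrightarrow> (h - y) \<bullet> w = 0"
    by (auto simp: orthogonal_def)
  moreover from this have "proj T h = y"
    by (rule proj_subspace_eqI[OF assms])
  ultimately show "proj T h \<in> T" and "w \<in> T \<Longrightarrow> (h - proj T h) \<bullet> w = 0"
    by simp_all
qed

lemma linear_proj_subspace:
  fixes T :: "'a::euclidean_space set"
  assumes T: "subspace T"
  shows "linear (proj T)"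
proof (rule linearI)
  fix a b :: 'a and c :: real
  show "proj T (a + b) = proj T a + proj T b"
  proof (rule proj_subspace_eqI[OF T])
    show "proj T a + proj T b \<in> T"
      using T by (simp add: proj_subspace_in subspace_add)
    show "(a + b - (proj T a + proj T b)) \<bullet> w = 0" if "w \<in> T" for w
      using proj_subspace_orthogonal[OF T that, of a] proj_subspace_orthogonal[OF T that, of b]
      by (simp add: inner_diff_left inner_add_left)
  qed
  show "proj T (c *\<^sub>R a) = c *\<^sub>R proj T a"
  proof (rule proj_subspace_eqI[OF T])
    show "c *\<^sub>R proj T a \<in> T"
      using T by (simp add: proj_subspace_in subspace_scale)
    show "(c *\<^sub>R a - c *\<^sub>R proj T a) \<bullet> w = 0" if "w \<in> T" for w
      using proj_subspace_orthogonal[OF T that, of a]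
      by (simp add: inner_diff_left)
  qed
qed

lemma proj_self:
  assumes "x \<in> C"
  shows "proj C x = x"
  unfolding proj_def by (rule some_equality) (use assms in auto)

lemma norm_proj_subspace_Pythagorean:
  fixes T :: "'a::euclidean_space set"
  assumes "subspace T"
  shows "norm v ^ 2 = norm (proj T v) ^ 2 + norm (v - proj T v) ^ 2"
proof -
  have "orthogonal (proj T v) (v - proj T v)"
    using proj_subspace[OF assms] by (simp add: orthogonal_def inner_commute)
  then show ?thesis
    using norm_add_Pythagorean[of "proj T v" "v - proj T v"] by simp
qed

lemma norm_proj_subspace_le:
  fixes T :: "'a::euclidean_space set"
  assumes "subspace T"
  shows "norm (proj T v) \<le> norm v" and "norm (v - proj T v) \<le> norm v"
  using norm_proj_subspace_Pythagorean[OF assms, of v]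
  by (simp_all add: power2_le_imp_le)

lemma norm_diff_proj_kernel_le:
  fixes L :: "'a::euclidean_space \<Rightarrow> 'b::euclidean_space"
  assumes L: "linear L"
  shows "\<exists>K>0. \<forall>v. norm (v - proj {v. L v = 0} v) \<le> K * norm (L v)"
proof -
  define T where "T = {v. L v = 0}"
  define S where "S = {q. \<forall>t\<in>T. orthogonal t q}"
  have T: "subspace T"
    unfolding T_def using L by (simp add: linear_subspace_kernel)
  have S: "subspace S" "closed S"
    unfolding S_def by (simp_all add: subspace_orthogonal_to_vectors closed_subspace)
  have inj: "\<forall>q\<in>S. L q = 0 \<longrightarrow> q = 0"
  proof (intro ballI impI)
    fix q assume "q \<in> S" "L q = 0"
    then have "orthogonal q q" by (simp add: S_def T_def)
    then show "q = 0" by (simp add: orthogonal_self)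
  qed
  have "bounded_linear L"
    using L by (simp add: linear_conv_bounded_linear)
  then obtain e where e: "e > 0" "\<And>q. q \<in> S \<Longrightarrow> e * norm q \<le> norm (L q)"
    using injective_imp_isometric[OF S(2,1) _ inj] by blast
  have "e * norm (v - proj T v) \<le> norm (L v)" for v
  proof -
    have "v - proj T v \<in> S"
      using proj_subspace_orthogonal[OF T] unfolding S_def orthogonal_def by (simp add: inner_commute)
    moreover have "L (v - proj T v) = L v"
      using proj_subspace_in[OF T] L by (simp add: T_def linear_diff)
    ultimately show ?thesis using e(2) by metis
  qed
  then have "\<forall>v. norm (v - proj T v) \<le> (1 / e) * norm (L v)"
    using e(1) by (simp add: field_simps)
  then show ?thesis
    using e(1) unfolding T_def by (intro exI[of _ "1 / e"]) simp
qed

section \<open>Nearest points and tangent subspaces\<close>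

(* proj is a choice of nearest point, meaningful only where a nearest point exists. *)
lemma proj_nearest_point_locally_closed:
  fixes M :: "'a::euclidean_space set"
  assumes closed: "closed (M \<inter> cball x r)" and "x \<in> M" and y: "dist y x < r / 2"
  shows "proj M y \<in> M \<and> (\<forall>w\<in>M. dist y (proj M y) \<le> dist y w)"
proof -
  have "0 \<le> r"
    using y zero_le_dist[of y x] by linarith
  with \<open>x \<in> M\<close> have "x \<in> M \<inter> cball x r"
    by simp
  then obtain z where z: "z \<in> M \<inter> cball x r" "\<And>w. w \<in> M \<inter> cball x r \<Longrightarrow> dist y z \<le> dist y w"
    using distance_attains_inf[OF closed, of y] by blast
  have nearest: "dist y z \<le> dist y w" if "w \<in> M" for w
  proof (cases "w \<in> cball x r")
    case True
    then show ?thesis using z(2) that by blast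
  next
    case False
    then have "r \<le> dist y w + dist y x"
      using dist_triangle[of x w y] by (simp add: dist_commute)
    moreover have "dist y z \<le> dist y x"
      using z(2) \<open>x \<in> M \<inter> cball x r\<close> by blast
    ultimately show ?thesis using y by linarith
  qed
  show ?thesis
    unfolding proj_def by (rule someI[of _ z]) (use z(1) nearest in blast)
qed

definition tangent_subspace :: "'a::euclidean_space set \<Rightarrow> 'a \<Rightarrow> 'a set \<Rightarrow> bool" where
  "tangent_subspace M x T \<longleftrightarrow> subspace T \<and>
     (\<forall>e>0. \<exists>d>0. \<forall>p\<in>M. norm (p - x) < d \<longrightarrow> norm ((p - x) - proj T (p - x)) \<le> e * norm (p - x)) \<and>
     (\<forall>e>0. \<exists>d>0. \<forall>t\<in>T. norm t < d \<longrightarrow> (\<exists>z\<in>M. norm (z - (x + t)) \<le> e * norm t))"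

lemma square_le_of_Pythagorean_slack:
  fixes a b q m n \<eta> :: real
  assumes "0 \<le> q" "0 \<le> \<eta>" "\<eta> \<le> 1" "q \<le> n" "q - m \<le> b" "m \<le> 2 * \<eta> * n"
    and "a ^ 2 + b ^ 2 \<le> (q + \<eta> * n) ^ 2"
  shows "a ^ 2 \<le> 9 * \<eta> * n ^ 2"
proof (cases "q \<le> 2 * \<eta> * n")
  case True
  have "a ^ 2 \<le> (q + \<eta> * n) ^ 2"
    using assms(7) zero_le_power2[of b] by linarith
  also have "\<dots> \<le> (3 * \<eta> * n) ^ 2"
    using True assms by (intro power_mono) simp_all
  also have "\<dots> = 9 * \<eta> * (\<eta> * n ^ 2)"
    by (simp add: power2_eq_square)
  also have "\<dots> \<le> 9 * \<eta> * n ^ 2"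
    using assms by (intro mult_left_mono) (simp_all add: mult_left_le_one_le)
  finally show ?thesis .
next
  case False
  then have "(q - 2 * \<eta> * n) ^ 2 \<le> b ^ 2"
    using assms by (intro power_mono) simp_all
  then have "a ^ 2 \<le> (q + \<eta> * n) ^ 2 - (q - 2 * \<eta> * n) ^ 2"
    using assms by linarith
  also have "\<dots> = \<eta> * (6 * q * n - 3 * \<eta> * n ^ 2)"
    by (simp add: power2_eq_square algebra_simps)
  also have "\<dots> \<le> \<eta> * (9 * n ^ 2)"
  proof (rule mult_left_mono)
    have "q * n \<le> n * n"
      using assms by (intro mult_right_mono) simp_all
    moreover have "0 \<le> \<eta> * (n * n)"
      using assms by simp
    moreover have "0 \<le> n * n"
      by simp
    ultimately show "6 * q * n - 3 * \<eta> * n ^ 2 \<le> 9 * n ^ 2"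
      unfolding power2_eq_square mult.assoc by linarith
  qed fact
  finally show ?thesis by simp
qed

lemma norm_diff_proj_perturbation:
  fixes T :: "'a::euclidean_space set"
  assumes T: "subspace T" and s: "0 \<le> s" "s \<le> 1"
    and hw: "norm (h - w) \<le> norm (h - proj T h) + s ^ 2 * norm h"
    and w: "norm (w - proj T w) \<le> 2 * s ^ 2 * norm h"
  shows "norm (w - proj T h) \<le> 5 * s * norm h"
proof -
  let ?P = "proj T"
  have diff: "?P (h - w) = ?P h - ?P w"
    using linear_proj_subspace[OF T] by (rule linear_diff)
  have residual: "h - w - (?P h - ?P w) = (h - ?P h) - (w - ?P w)"
    by (simp add: algebra_simps)
  have "norm (h - w) ^ 2 = norm (?P h - ?P w) ^ 2 + norm ((h - ?P h) - (w - ?P w)) ^ 2"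
    using norm_proj_subspace_Pythagorean[OF T, of "h - w"] unfolding diff residual .
  moreover have "norm (h - w) ^ 2 \<le> (norm (h - ?P h) + s ^ 2 * norm h) ^ 2"
    using hw by (intro power_mono) simp_all
  ultimately have sum: "norm (?P h - ?P w) ^ 2 + norm ((h - ?P h) - (w - ?P w)) ^ 2
      \<le> (norm (h - ?P h) + s ^ 2 * norm h) ^ 2"
    by simp
  have "norm (?P h - ?P w) ^ 2 \<le> 9 * s ^ 2 * norm h ^ 2"
    by (rule square_le_of_Pythagorean_slack[OF _ _ _ norm_proj_subspace_le(2)[OF T]
          norm_triangle_ineq2 w sum]) (use s in \<open>simp_all add: power_le_one\<close>)
  also have "\<dots> = (3 * s * norm h) ^ 2"
    by (simp add: power_mult_distrib)
  finally have "norm (?P h - ?P w) \<le> 3 * s * norm h"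
    by (rule power2_le_imp_le) (use s in simp)
  moreover have "s ^ 2 \<le> s"
    using s by (simp add: power2_eq_square mult_left_le_one_le)
  then have "2 * s ^ 2 * norm h \<le> 2 * s * norm h"
    by (intro mult_right_mono) simp_all
  moreover have "norm (w - ?P h) \<le> norm (w - ?P w) + norm (?P h - ?P w)"
    using norm_triangle_ineq4[of "w - ?P w" "?P h - ?P w"] by simp
  ultimately show ?thesis
    using w by linarith
qed

lemma norm_nearest_point_diff_le:
  assumes "x \<in> M" and nearest: "\<And>q. q \<in> M \<Longrightarrow> norm (y - p) \<le> norm (y - q)"
  shows "norm (p - x) \<le> 2 * norm (y - x)"
  using nearest[OF \<open>x \<in> M\<close>] norm_triangle_ineq[of "p - y" "y - x"] by (simp add: norm_minus_commute)

lemma nearest_point_tangent_estimate: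
  fixes M T :: "'a::euclidean_space set"
  assumes T: "subspace T" and s: "0 \<le> s" "s \<le> 1" and "x \<in> M" and "z \<in> M"
    and nearest: "\<And>q. q \<in> M \<Longrightarrow> norm (y - p) \<le> norm (y - q)"
    and p: "norm ((p - x) - proj T (p - x)) \<le> s ^ 2 * norm (p - x)"
    and z: "norm (z - (x + proj T (y - x))) \<le> s ^ 2 * norm (proj T (y - x))"
  shows "norm ((p - x) - proj T (y - x)) \<le> 5 * s * norm (y - x)"
proof -
  have "s ^ 2 * norm (p - x) \<le> 2 * s ^ 2 * norm (y - x)"
    using mult_left_mono[OF norm_nearest_point_diff_le[OF \<open>x \<in> M\<close> nearest], of "s ^ 2"] by simp
  with p have p_est: "norm ((p - x) - proj T (p - x)) \<le> 2 * s ^ 2 * norm (y - x)"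
    by linarith
  have "norm ((y - x) - (p - x)) \<le> norm ((y - x - proj T (y - x)) - (z - (x + proj T (y - x))))"
    using nearest[OF \<open>z \<in> M\<close>] by (simp add: algebra_simps)
  also have "\<dots> \<le> norm (y - x - proj T (y - x)) + s ^ 2 * norm (proj T (y - x))"
    using norm_triangle_ineq4[of "y - x - proj T (y - x)" "z - (x + proj T (y - x))"] z by linarith
  also have "\<dots> \<le> norm (y - x - proj T (y - x)) + s ^ 2 * norm (y - x)"
    using norm_proj_subspace_le(1)[OF T] by (intro add_left_mono mult_left_mono) simp_all
  finally show ?thesis
    using p_est by (rule norm_diff_proj_perturbation[OF T s])
qed

lemma has_derivative_proj_tangent_subspace:
  fixes M :: "'a::euclidean_space set"
  assumes tangent: "tangent_subspace M x T" and "x \<in> M"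
    and closed: "closed (M \<inter> cball x r)" and "r > 0"
  shows "(proj M has_derivative proj T) (at x)"
  unfolding has_derivative_at_alt
proof (intro conjI allI impI)
  have T: "subspace T"
    and M_near_T: "\<And>e. e > 0 \<Longrightarrow> \<exists>d>0. \<forall>p\<in>M. norm (p - x) < d \<longrightarrow>
        norm ((p - x) - proj T (p - x)) \<le> e * norm (p - x)"
    and T_near_M: "\<And>e. e > 0 \<Longrightarrow> \<exists>d>0. \<forall>t\<in>T. norm t < d \<longrightarrow> (\<exists>z\<in>M. norm (z - (x + t)) \<le> e * norm t)"
    using tangent unfolding tangent_subspace_def by simp_all
  show "bounded_linear (proj T)"
    using linear_proj_subspace[OF T] by (simp add: linear_conv_bounded_linear)
  fix e :: real assume "e > 0"
  \<comment> \<open>Tangency up to \<open>s\<^sup>2\<close> only yields accuracy \<open>5 s\<close>: the orthogonal splitting loses a square root.\<close>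
  define s where "s = min 1 (e / 5)"
  have s: "0 < s" "s \<le> 1" "5 * s \<le> e"
    using \<open>e > 0\<close> by (auto simp: s_def)
  obtain d1 where "d1 > 0" and d1: "\<And>p. p \<in> M \<Longrightarrow> norm (p - x) < d1 \<Longrightarrow>
      norm ((p - x) - proj T (p - x)) \<le> s ^ 2 * norm (p - x)"
    using M_near_T[of "s ^ 2"] s by auto
  obtain d2 where "d2 > 0" and d2: "\<And>t. t \<in> T \<Longrightarrow> norm t < d2 \<Longrightarrow>
      \<exists>z\<in>M. norm (z - (x + t)) \<le> s ^ 2 * norm t"
    using T_near_M[of "s ^ 2"] s by auto
  show "\<exists>d>0. \<forall>y. norm (y - x) < d \<longrightarrow> norm (proj M y - proj M x - proj T (y - x)) \<le> e * norm (y - x)"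
  proof (intro exI[of _ "min (r / 2) (min (d1 / 2) d2)"] conjI allI impI)
    show "0 < min (r / 2) (min (d1 / 2) d2)"
      using \<open>r > 0\<close> \<open>d1 > 0\<close> \<open>d2 > 0\<close> by simp
    fix y assume y: "norm (y - x) < min (r / 2) (min (d1 / 2) d2)"
    have "proj M y \<in> M" and nearest: "\<And>q. q \<in> M \<Longrightarrow> norm (y - proj M y) \<le> norm (y - q)"
      using proj_nearest_point_locally_closed[OF closed \<open>x \<in> M\<close>, of y] y by (auto simp: dist_norm)
    have "norm (proj M y - x) < d1"
      using norm_nearest_point_diff_le[OF \<open>x \<in> M\<close> nearest] y by simp
    then have p: "norm ((proj M y - x) - proj T (proj M y - x)) \<le> s ^ 2 * norm (proj M y - x)"
      using d1[OF \<open>proj M y \<in> M\<close>] by simp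
    have "norm (proj T (y - x)) < d2"
      using norm_proj_subspace_le(1)[OF T, of "y - x"] y by simp
    then obtain z where "z \<in> M" and z: "norm (z - (x + proj T (y - x))) \<le> s ^ 2 * norm (proj T (y - x))"
      using d2 proj_subspace_in[OF T] by blast
    have "norm ((proj M y - x) - proj T (y - x)) \<le> 5 * s * norm (y - x)"
      using s by (intro nearest_point_tangent_estimate[OF T _ _ \<open>x \<in> M\<close> \<open>z \<in> M\<close> nearest p z]) simp_all
    also have "\<dots> \<le> e * norm (y - x)"
      using s by (intro mult_right_mono) simp_all
    finally show "norm (proj M y - proj M x - proj T (y - x)) \<le> e * norm (y - x)"
      using proj_self[OF \<open>x \<in> M\<close>] by simp
  qed
qed

section \<open>Zero sets of submersions\<close>

lemma inverse_function_theorem_inj: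
  fixes f :: "'a::euclidean_space \<Rightarrow> 'a"
  assumes U: "open U" "x \<in> U"
    and der: "\<And>y. y \<in> U \<Longrightarrow> (f has_derivative f' y) (at y)"
    and cont: "\<And>v. continuous_on U (\<lambda>y. f' y v)"
    and inj: "inj (f' x)"
  shows "\<exists>W g. open W \<and> f x \<in> W \<and> g (f x) = x \<and> (\<forall>z\<in>W. g z \<in> U \<and> f (g z) = z) \<and>
           (g has_derivative inv (f' x)) (at (f x))"
proof -
  have bl: "bounded_linear (f' y)" if "y \<in> U" for y
    using der[OF that] by (rule has_derivative_bounded_linear)
  have apply_Blinfun: "blinfun_apply (Blinfun (f' y)) = f' y" if "y \<in> U" for y
    using bl[OF that] by (rule bounded_linear_Blinfun_apply)
  have der': "(f has_derivative blinfun_apply (Blinfun (f' y))) (at y)" if "y \<in> U" for y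
    using der[OF that] by (simp add: apply_Blinfun[OF that])
  have cont': "continuous_on U (\<lambda>y. Blinfun (f' y))"
  proof (rule continuous_on_blinfun_componentwise)
    fix v :: 'a
    show "continuous_on U (\<lambda>y. blinfun_apply (Blinfun (f' y)) v)"
      using cont[of v] by (rule continuous_on_eq) (simp add: apply_Blinfun)
  qed
  obtain h where "linear h" and h: "h \<circ> f' x = id"
    using linear_injective_left_inverse[OF bounded_linear.linear[OF bl[OF U(2)]] inj] by blast
  then have invf: "Blinfun h o\<^sub>L Blinfun (f' x) = id_blinfun"
    by (intro blinfun_eqI)
      (simp add: bounded_linear_Blinfun_apply linear_conv_bounded_linear apply_Blinfun[OF U(2)] pointfree_idE)
  obtain U' W g g' where "open U'" "U' \<subseteq> U" "x \<in> U'" "open W" "f x \<in> W"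
    and hom: "homeomorphism U' W f g"
    and der_g: "\<And>z. z \<in> W \<Longrightarrow> (g has_derivative g' z) (at z)"
    and g': "\<And>z. z \<in> W \<Longrightarrow> g' z = inv (blinfun_apply (Blinfun (f' (g z))))"
    and "\<And>z. z \<in> W \<Longrightarrow> bij (blinfun_apply (Blinfun (f' (g z))))"
    using inverse_function_theorem[OF U(1) der' cont' U(2) invf] by blast
  have gfx: "g (f x) = x"
    using homeomorphism_apply1[OF hom \<open>x \<in> U'\<close>] .
  have inv_W: "g z \<in> U \<and> f (g z) = z" if "z \<in> W" for z
    using homeomorphism_image2[OF hom] homeomorphism_apply2[OF hom that] that \<open>U' \<subseteq> U\<close> by blast
  have der_gfx: "(g has_derivative inv (f' x)) (at (f x))"
    using der_g[OF \<open>f x \<in> W\<close>] g'[OF \<open>f x \<in> W\<close>] gfx by (simp add: apply_Blinfun[OF U(2)])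
  show ?thesis
    using \<open>open W\<close> \<open>f x \<in> W\<close> gfx inv_W der_gfx by blast
qed

lemma adjoint_kernel_range_eq_zero:
  fixes L :: "'a::euclidean_space \<Rightarrow> 'b::euclidean_space"
  assumes L: "linear L" and "w \<in> range L" and "L (adjoint L w) = 0"
  shows "w = 0"
proof -
  have "adjoint L w \<bullet> adjoint L w = w \<bullet> L (adjoint L w)"
    by (rule adjoint_clauses(2)[OF L])
  then have "adjoint L w = 0"
    using assms(3) by simp
  moreover obtain u where "w = L u"
    using \<open>w \<in> range L\<close> by blast
  ultimately have "w \<bullet> w = 0"
    using adjoint_clauses(1)[OF L, of u w] by simp
  then show ?thesis by simp
qed

lemma inj_proj_kernel_add_adjoint:
  fixes L :: "'a::euclidean_space \<Rightarrow> 'b::euclidean_space"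
  assumes L: "linear L"
  shows "inj (\<lambda>v. proj {v. L v = 0} v + adjoint L (L v))"
proof -
  let ?T = "{v. L v = 0}" and ?D = "\<lambda>v. proj {v. L v = 0} v + adjoint L (L v)"
  have T: "subspace ?T"
    by (rule linear_subspace_kernel[OF L])
  have "linear (\<lambda>v. adjoint L (L v))"
    using linear_compose[OF L adjoint_linear[OF L]] by (simp add: o_def)
  then have lin: "linear ?D"
    by (rule linear_compose_add[OF linear_proj_subspace[OF T]])
  have zero: "v = 0" if "?D v = 0" for v
  proof -
    have sum: "proj ?T v + adjoint L (L v) = 0"
      using that by simp
    have cross: "proj ?T v \<bullet> adjoint L (L v) = 0"
      using adjoint_clauses(1)[OF L, of "proj ?T v" "L v"] proj_subspace_in[OF T, of v] by simp
    have "proj ?T v \<bullet> proj ?T v = proj ?T v \<bullet> (proj ?T v + adjoint L (L v))"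
      using cross by (simp add: inner_add_right)
    then have Pv: "proj ?T v = 0"
      using sum by simp
    then have "L (adjoint L (L v)) = 0"
      using sum by (simp add: linear_0[OF L])
    then have "v \<in> ?T"
      using adjoint_kernel_range_eq_zero[OF L rangeI] by simp
    then show "v = 0"
      using Pv by (simp add: proj_self)
  qed
  show ?thesis
    unfolding linear_injective_0[OF lin] using zero by blast
qed

lemma level_set_near_kernel:
  fixes F :: "'a::euclidean_space \<Rightarrow> 'b::euclidean_space"
  assumes der: "(F has_derivative L) (at x)"
  shows "\<forall>e>0. \<exists>d>0. \<forall>p. F p = F x \<longrightarrow> norm (p - x) < d \<longrightarrow>
           norm ((p - x) - proj {v. L v = 0} (p - x)) \<le> e * norm (p - x)"
proof (intro allI impI)
  fix e :: real assume "e > 0"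
  obtain K where K: "K > 0" "\<And>v. norm (v - proj {v. L v = 0} v) \<le> K * norm (L v)"
    using norm_diff_proj_kernel_le[OF has_derivative_linear[OF der]] by blast
  have "e / K > 0"
    using \<open>e > 0\<close> K(1) by simp
  then obtain d where "d > 0"
    and d: "\<And>p. norm (p - x) < d \<Longrightarrow> norm (F p - F x - L (p - x)) \<le> e / K * norm (p - x)"
    using der unfolding has_derivative_at_alt by blast
  have "norm ((p - x) - proj {v. L v = 0} (p - x)) \<le> e * norm (p - x)"
    if "F p = F x" "norm (p - x) < d" for p
  proof -
    have "norm ((p - x) - proj {v. L v = 0} (p - x)) \<le> K * norm (L (p - x))"
      by (rule K(2))
    also have "\<dots> \<le> K * (e / K * norm (p - x))"
      using d[OF that(2)] that(1) K(1) by (intro mult_left_mono) simp_all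
    also have "\<dots> = e * norm (p - x)"
      using K(1) by simp
    finally show ?thesis .
  qed
  with \<open>d > 0\<close> show "\<exists>d>0. \<forall>p. F p = F x \<longrightarrow> norm (p - x) < d \<longrightarrow>
      norm ((p - x) - proj {v. L v = 0} (p - x)) \<le> e * norm (p - x)"
    by blast
qed

lemma zero_set_parametrization_over_kernel:
  fixes F :: "'a::euclidean_space \<Rightarrow> 'b::euclidean_space" and DF :: "'a \<Rightarrow> 'a \<Rightarrow> 'b"
  assumes U: "open U" "x \<in> U" and "F x = 0"
    and der: "\<And>y. y \<in> U \<Longrightarrow> (F has_derivative DF y) (at y)"
    and cont: "\<And>v. continuous_on U (\<lambda>y. DF y v)"
    and range: "\<And>y. y \<in> U \<Longrightarrow> F y \<in> range (DF x)"
  obtains W g g' where "open W" "0 \<in> W" "g 0 = x" "(g has_derivative g') (at 0)"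
    and "\<And>t. DF x t = 0 \<Longrightarrow> g' t = t"
    and "\<And>t. t \<in> W \<Longrightarrow> DF x t = 0 \<Longrightarrow> g t \<in> U \<and> F (g t) = 0"
proof -
  let ?L = "DF x" and ?T = "{v. DF x v = 0}"
  let ?D = "\<lambda>v. proj ?T v + adjoint ?L (?L v)"
  have L: "linear ?L"
    using der[OF U(2)] by (rule has_derivative_linear)
  have T: "subspace ?T"
    by (rule linear_subspace_kernel[OF L])
  have blP: "bounded_linear (proj ?T)" and blA: "bounded_linear (adjoint ?L)"
    using linear_proj_subspace[OF T] adjoint_linear[OF L] by (simp_all add: linear_conv_bounded_linear)
  \<comment> \<open>On the kernel, \<open>G z = t\<close> puts \<open>L\<^sup>* (F z)\<close> into \<open>ker L \<inter> range L\<^sup>* = {0}\<close>, so the local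
    inverse of \<open>G\<close> maps the kernel into the zero set.\<close>
  define G where "G y = proj ?T (y - x) + adjoint ?L (F y)" for y
  have derG: "(G has_derivative (\<lambda>v. proj ?T v + adjoint ?L (DF y v))) (at y)" if "y \<in> U" for y
  proof -
    have "(G has_derivative (\<lambda>v. proj ?T (v - 0) + adjoint ?L (DF y v))) (at y)"
      unfolding G_def[abs_def]
      by (intro has_derivative_add bounded_linear.has_derivative[OF blP]
          bounded_linear.has_derivative[OF blA] has_derivative_diff has_derivative_ident
          has_derivative_const der[OF that])
    then show ?thesis by simp
  qed
  have contG: "continuous_on U (\<lambda>y. proj ?T v + adjoint ?L (DF y v))" for v
    by (intro continuous_on_add continuous_on_const
        continuous_on_compose2[OF linear_continuous_on[OF blA, of UNIV] cont]) simp
  obtain W g where "open W" "G x \<in> W" "g (G x) = x" and g: "\<forall>z\<in>W. g z \<in> U \<and> G (g z) = z"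
    and der_g: "(g has_derivative inv ?D) (at (G x))"
    using inverse_function_theorem_inj[where f' = "\<lambda>y v. proj ?T v + adjoint ?L (DF y v)",
          OF U derG contG inj_proj_kernel_add_adjoint[OF L]] by blast
  moreover have "G x = 0"
    using \<open>F x = 0\<close> linear_0[OF linear_proj_subspace[OF T]] linear_0[OF adjoint_linear[OF L]]
    by (simp add: G_def)
  ultimately have "0 \<in> W" "g 0 = x" "(g has_derivative inv ?D) (at 0)"
    by simp_all
  show ?thesis
  proof (rule that[OF \<open>open W\<close> \<open>0 \<in> W\<close> \<open>g 0 = x\<close> \<open>(g has_derivative inv ?D) (at 0)\<close>])
    fix t assume "?L t = 0"
    then have "?D t = t"
      by (simp add: proj_self linear_0[OF adjoint_linear[OF L]])
    then show "inv ?D t = t"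
      using inv_f_f[OF inj_proj_kernel_add_adjoint[OF L], of t] by simp
  next
    fix t assume "t \<in> W" "?L t = 0"
    define z where "z = g t"
    have "z \<in> U" and "G z = t"
      using g \<open>t \<in> W\<close> by (simp_all add: z_def)
    then have "adjoint ?L (F z) = t - proj ?T (z - x)"
      by (simp add: G_def algebra_simps)
    also have "\<dots> \<in> ?T"
      using \<open>?L t = 0\<close> proj_subspace_in[OF T, of "z - x"] by (simp add: linear_diff[OF L])
    finally have "F z = 0"
      using adjoint_kernel_range_eq_zero[OF L range[OF \<open>z \<in> U\<close>]] by simp
    with \<open>z \<in> U\<close> show "g t \<in> U \<and> F (g t) = 0"
      by (simp add: z_def)
  qed
qed

lemma zero_set_near_kernel:
  fixes F :: "'a::euclidean_space \<Rightarrow> 'b::euclidean_space" and DF :: "'a \<Rightarrow> 'a \<Rightarrow> 'b"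
  assumes "open U" "x \<in> U" "F x = 0"
    and "\<And>y. y \<in> U \<Longrightarrow> (F has_derivative DF y) (at y)"
    and "\<And>v. continuous_on U (\<lambda>y. DF y v)"
    and "\<And>y. y \<in> U \<Longrightarrow> F y \<in> range (DF x)"
  shows "\<forall>e>0. \<exists>d>0. \<forall>t. DF x t = 0 \<longrightarrow> norm t < d \<longrightarrow> (\<exists>z\<in>U. F z = 0 \<and> norm (z - (x + t)) \<le> e * norm t)"
proof (intro allI impI)
  fix e :: real assume "e > 0"
  obtain W g g' where "open W" "0 \<in> W" "g 0 = x" and der_g: "(g has_derivative g') (at 0)"
    and g'_id: "\<And>t. DF x t = 0 \<Longrightarrow> g' t = t"
    and g: "\<And>t. t \<in> W \<Longrightarrow> DF x t = 0 \<Longrightarrow> g t \<in> U \<and> F (g t) = 0"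
    using zero_set_parametrization_over_kernel[OF assms] by blast
  obtain d1 where "d1 > 0" "ball 0 d1 \<subseteq> W"
    using \<open>open W\<close> \<open>0 \<in> W\<close> open_contains_ball by blast
  obtain d2 where "d2 > 0" and d2: "\<And>t. norm t < d2 \<Longrightarrow> norm (g t - g 0 - g' t) \<le> e * norm t"
    using der_g \<open>e > 0\<close> unfolding has_derivative_at_alt by fastforce
  have "\<exists>z\<in>U. F z = 0 \<and> norm (z - (x + t)) \<le> e * norm t"
    if "DF x t = 0" "norm t < min d1 d2" for t
  proof
    have "t \<in> W"
      using that(2) \<open>ball 0 d1 \<subseteq> W\<close> by auto
    then show "g t \<in> U" and "F (g t) = 0 \<and> norm (g t - (x + t)) \<le> e * norm t"
      using g[OF _ that(1)] d2[of t] that(2) g'_id[OF that(1)] \<open>g 0 = x\<close> by (simp_all add: diff_diff_eq)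
  qed
  then show "\<exists>d>0. \<forall>t. DF x t = 0 \<longrightarrow> norm t < d \<longrightarrow> (\<exists>z\<in>U. F z = 0 \<and> norm (z - (x + t)) \<le> e * norm t)"
    using \<open>d1 > 0\<close> \<open>d2 > 0\<close> by (intro exI[of _ "min d1 d2"]) auto
qed

section \<open>Manifolds\<close>

lemma C_k_on_imp_continuous_on:
  assumes "C_k_on k U F"
  shows "continuous_on U F"
  using assms[unfolded C_k_on_def, rule_format, of "[]"] by simp

lemma C_k_on_imp_continuous_on_derivative:
  assumes "C_k_on k U F" and "1 \<le> k"
  shows "continuous_on U (\<lambda>y. frechet_derivative F (at y) v)"
  using assms(1)[unfolded C_k_on_def, rule_format, of "[v]"] assms(2) by simp

lemma chart_tangent_subspace:
  assumes chart: "manifold_chart k M x U F V" and "1 \<le> k" and "x \<in> M"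
  shows "tangent_subspace M x {v. frechet_derivative F (at x) v = 0}"
proof -
  define DF where "DF y = frechet_derivative F (at y)" for y
  have U: "open U" "x \<in> U" and MU: "M \<inter> U = {y \<in> U. F y = 0}" and Ck: "C_k_on k U F"
    and chartU: "\<And>y. y \<in> U \<Longrightarrow> F y \<in> V \<and> F differentiable (at y) \<and> range (DF y) = V"
    using chart by (auto simp: manifold_chart_def DF_def)
  have der: "(F has_derivative DF y) (at y)" if "y \<in> U" for y
    using chartU[OF that] frechet_derivative_works by (auto simp: DF_def)
  have "F x = 0"
    using \<open>x \<in> M\<close> U MU by auto
  have range: "F y \<in> range (DF x)" if "y \<in> U" for y
    using chartU[OF that] chartU[OF U(2)] by simp
  have cont: "continuous_on U (\<lambda>y. DF y v)" for v
    using C_k_on_imp_continuous_on_derivative[OF Ck \<open>1 \<le> k\<close>] by (simp add: DF_def)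
  obtain r where "r > 0" "ball x r \<subseteq> U"
    using U open_contains_ball by blast
  have "subspace {v. DF x v = 0}"
    by (rule linear_subspace_kernel[OF has_derivative_linear[OF der[OF U(2)]]])
  moreover have "\<exists>d>0. \<forall>p\<in>M. norm (p - x) < d \<longrightarrow>
      norm ((p - x) - proj {v. DF x v = 0} (p - x)) \<le> e * norm (p - x)" if "e > 0" for e
  proof -
    obtain d where "d > 0" and d: "\<And>p. F p = F x \<Longrightarrow> norm (p - x) < d \<Longrightarrow>
        norm ((p - x) - proj {v. DF x v = 0} (p - x)) \<le> e * norm (p - x)"
      using level_set_near_kernel[OF der[OF U(2)]] \<open>e > 0\<close> by blast
    have "F p = F x" if "p \<in> M" "norm (p - x) < r" for p
    proof -
      have "p \<in> U"
        using that(2) \<open>ball x r \<subseteq> U\<close> by (auto simp: dist_norm norm_minus_commute)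
      then show ?thesis
        using that(1) MU \<open>F x = 0\<close> by auto
    qed
    then show ?thesis
      using \<open>d > 0\<close> \<open>r > 0\<close> d by (intro exI[of _ "min d r"]) auto
  qed
  moreover have "\<exists>d>0. \<forall>t\<in>{v. DF x v = 0}. norm t < d \<longrightarrow> (\<exists>z\<in>M. norm (z - (x + t)) \<le> e * norm t)"
    if "e > 0" for e
  proof -
    obtain d where "d > 0" and d: "\<And>t. DF x t = 0 \<Longrightarrow> norm t < d \<Longrightarrow>
        \<exists>z\<in>U. F z = 0 \<and> norm (z - (x + t)) \<le> e * norm t"
      using zero_set_near_kernel[OF U \<open>F x = 0\<close> der cont range] \<open>e > 0\<close> by blast
    then show ?thesis
      using MU by (intro exI[of _ d]) blast
  qed
  ultimately show ?thesis
    unfolding tangent_subspace_def DF_def by blast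
qed

lemma chart_locally_closed:
  assumes "manifold_chart k M x U F V"
  shows "\<exists>r>0. closed (M \<inter> cball x r)"
proof -
  have U: "open U" "x \<in> U" and MU: "M \<inter> U = {y \<in> U. F y = 0}" and "C_k_on k U F"
    using assms by (auto simp: manifold_chart_def)
  obtain r where "r > 0" and "cball x r \<subseteq> U"
    using U open_contains_cball by blast
  then have "M \<inter> cball x r = {y \<in> cball x r. F y = 0}"
    using MU by blast
  moreover have "closed {y \<in> cball x r. F y = 0}"
    using continuous_on_subset[OF C_k_on_imp_continuous_on[OF \<open>C_k_on k U F\<close>] \<open>cball x r \<subseteq> U\<close>]
    by (intro continuous_closed_preimage_constant) simp_all
  ultimately show ?thesis
    using \<open>r > 0\<close> by auto
qed

lemma tangent_space_chart:
  assumes "manifold_around k M x"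
  shows "\<exists>U F V. manifold_chart k M x U F V \<and> tangent_space k M x = {v. frechet_derivative F (at x) v = 0}"
proof -
  have "\<exists>T U F V. manifold_chart k M x U F V \<and> T = {v. frechet_derivative F (at x) v = 0}"
    using assms by (auto simp: manifold_around_def)
  then show ?thesis
    unfolding tangent_space_def by (rule someI_ex)
qed

lemma has_derivative_proj_manifold:
  assumes "manifold_around k M x" and "1 \<le> k" and "x \<in> M"
  shows "(proj M has_derivative proj (tangent_space k M x)) (at x)"
proof -
  obtain U F V where chart: "manifold_chart k M x U F V"
    and T: "tangent_space k M x = {v. frechet_derivative F (at x) v = 0}"
    using tangent_space_chart[OF assms(1)] by blast
  obtain r where "r > 0" "closed (M \<inter> cball x r)"
    using chart_locally_closed[OF chart] by blast
  show ?thesis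
    unfolding T using chart_tangent_subspace[OF chart assms(2,3)] assms(3) \<open>closed (M \<inter> cball x r)\<close> \<open>r > 0\<close>
    by (rule has_derivative_proj_tangent_subspace)
qed

lemma has_derivative_relax_proj_manifold:
  assumes "manifold_around k M x" and "1 \<le> k" and "x \<in> M"
  shows "(relax_proj a M has_derivative relax_proj a (tangent_space k M x)) (at x)"
  unfolding relax_proj_def[abs_def]
  by (intro has_derivative_add has_derivative_scaleR_right has_derivative_ident
      has_derivative_proj_manifold[OF assms])

theorem lemma5:
  fixes M N :: "'a::euclidean_space set" and xbar :: 'a and k :: nat and \<alpha> \<alpha>1 \<alpha>2 :: real
  assumes "regularity_assumption k M N xbar"
  shows "((\<lambda>y. (1 - \<alpha>) *\<^sub>R y + \<alpha> *\<^sub>R relax_proj \<alpha>2 M (relax_proj \<alpha>1 N y))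
          has_derivative
          (\<lambda>h. (1 - \<alpha>) *\<^sub>R h + \<alpha> *\<^sub>R relax_proj \<alpha>2 (tangent_space k M xbar)
                                          (relax_proj \<alpha>1 (tangent_space k N xbar) h)))
         (at xbar)"
proof -
  have "1 \<le> k" "xbar \<in> M" "xbar \<in> N" "manifold_around k M xbar" "manifold_around k N xbar"
    using assms by (auto simp: regularity_assumption_def)
  have "relax_proj \<alpha>1 N xbar = xbar"
    by (simp add: relax_proj_def proj_self[OF \<open>xbar \<in> N\<close>] scaleR_diff_left)
  then have "(relax_proj \<alpha>2 M \<circ> relax_proj \<alpha>1 N has_derivative
      relax_proj \<alpha>2 (tangent_space k M xbar) \<circ> relax_proj \<alpha>1 (tangent_space k N xbar)) (at xbar)"
    using has_derivative_relax_proj_manifold[OF \<open>manifold_around k N xbar\<close> \<open>1 \<le> k\<close> \<open>xbar \<in> N\<close>]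
      has_derivative_relax_proj_manifold[OF \<open>manifold_around k M xbar\<close> \<open>1 \<le> k\<close> \<open>xbar \<in> M\<close>]
    by (intro diff_chain_at) simp_all
  then show ?thesis
    unfolding o_def by (intro has_derivative_add has_derivative_scaleR_right has_derivative_ident)
qed

end
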